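(* Consider the upper half-space model $\mathbb{H}^3=\{(x_1,x_2,x_3)\in\mathbb{R}^3: x_3>0\}$ with metric $g=\frac{1}{x_3^2}(dx_1^2+dx_2^2+dx_3^2)$. Let $E$ be a complete end of revolution in $\mathbb{H}^3$ about the $x_3$-axis, and suppose there is $z>0$ such that $E$ is contained on the horosphere $\{x_3=z\}$, i.e. $E\subset\{x\in\mathbb{H}^3: x_3\ge z\}$. Then $E$ is parabolic.
   Context: A complete end of revolution about the $x_3$-axis is the set $E=\{(\gamma_1(s)\cos\theta,\gamma_1(s)\sin\theta,\gamma_2(s)): s\ge0,\ \theta\in[0,2\pi)\}$, where $\gamma(s)=(\gamma_1(s),0,\gamma_2(s))$, $s\in[0,\infty)$, is a smooth regular curve with $\gamma_1>0$, $\gamma_2>0$ and infinite hyperbolic length; $E$ carries the metric induced by this immersion of $[0,\infty)\times\mathbb{S}^1$. An end $E$ is parabolic if every bounded harmonic function on $E$ is determined by its boundary values. *)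

theory Defs
  imports "HOL-Analysis.Analysis"
begin

definition smooth_on :: "real set \<Rightarrow> (real \<Rightarrow> real) \<Rightarrow> bool" where
  "smooth_on U f \<longleftrightarrow> open U \<and> (\<forall>n. \<forall>x\<in>U. ((deriv ^^ n) f) differentiable (at x))"

text \<open>Generating curve gamma(s) = (g1 s, 0, g2 s), s in [0,oo): smooth (on an open
  neighbourhood of [0,oo)), regular, with g1 > 0, g2 > 0, and infinite hyperbolic length.\<close>
definition hyp_length :: "(real \<Rightarrow> real) \<Rightarrow> (real \<Rightarrow> real) \<Rightarrow> real \<Rightarrow> real" where
  "hyp_length g1 g2 T =
     integral {0..T} (\<lambda>s. sqrt ((deriv g1 s)\<^sup>2 + (deriv g2 s)\<^sup>2) / g2 s)"

definition complete_end_of_revolution :: "(real \<Rightarrow> real) \<Rightarrow> (real \<Rightarrow> real) \<Rightarrow> bool" where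
  "complete_end_of_revolution g1 g2 \<longleftrightarrow>
     (\<exists>U. {0..} \<subseteq> U \<and> smooth_on U g1 \<and> smooth_on U g2) \<and>
     (\<forall>s\<ge>0. (deriv g1 s)\<^sup>2 + (deriv g2 s)\<^sup>2 > 0) \<and>
     (\<forall>s\<ge>0. g1 s > 0 \<and> g2 s > 0) \<and>
     filterlim (hyp_length g1 g2) at_top at_top"

text \<open>Induced metric of the immersion (s,theta) |-> (g1 s cos theta, g1 s sin theta, g2 s)
  into the upper half-space with metric (dx1^2+dx2^2+dx3^2)/x3^2; it is diagonal:
  g_ss = |gamma'|^2 / g2^2,  g_tt = g1^2 / g2^2,  g_st = 0.\<close>
definition g_ss :: "(real \<Rightarrow> real) \<Rightarrow> (real \<Rightarrow> real) \<Rightarrow> real \<Rightarrow> real" where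
  "g_ss g1 g2 s = ((deriv g1 s)\<^sup>2 + (deriv g2 s)\<^sup>2) / (g2 s)\<^sup>2"

definition g_tt :: "(real \<Rightarrow> real) \<Rightarrow> (real \<Rightarrow> real) \<Rightarrow> real \<Rightarrow> real" where
  "g_tt g1 g2 s = (g1 s)\<^sup>2 / (g2 s)\<^sup>2"

definition pd1 :: "(real \<times> real \<Rightarrow> real) \<Rightarrow> real \<times> real \<Rightarrow> real" where
  "pd1 u = (\<lambda>(s,t). deriv (\<lambda>r. u (r,t)) s)"

definition pd2 :: "(real \<times> real \<Rightarrow> real) \<Rightarrow> real \<times> real \<Rightarrow> real" where
  "pd2 u = (\<lambda>(s,t). deriv (\<lambda>r. u (s,r)) t)"

definition C2_on :: "(real \<times> real) set \<Rightarrow> (real \<times> real \<Rightarrow> real) \<Rightarrow> bool" where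
  "C2_on U u \<longleftrightarrow> open U \<and>
     (\<forall>p\<in>U. u differentiable (at p) \<and> pd1 u differentiable (at p) \<and> pd2 u differentiable (at p)) \<and>
     continuous_on U (pd1 (pd1 u)) \<and> continuous_on U (pd1 (pd2 u)) \<and>
     continuous_on U (pd2 (pd1 u)) \<and> continuous_on U (pd2 (pd2 u))"

definition laplace_beltrami ::
  "(real \<Rightarrow> real) \<Rightarrow> (real \<Rightarrow> real) \<Rightarrow> (real \<times> real \<Rightarrow> real) \<Rightarrow> real \<times> real \<Rightarrow> real" where
  "laplace_beltrami g1 g2 u = (\<lambda>(s,t).
     (1 / sqrt (g_ss g1 g2 s * g_tt g1 g2 s)) *
       (pd1 (\<lambda>(r,q). sqrt (g_ss g1 g2 r * g_tt g1 g2 r) / g_ss g1 g2 r * pd1 u (r,q)) (s,t)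
      + pd2 (\<lambda>(r,q). sqrt (g_ss g1 g2 r * g_tt g1 g2 r) / g_tt g1 g2 r * pd2 u (r,q)) (s,t)))"

text \<open>A function on the end E = [0,oo) x S^1 (represented as a 2pi-periodic function in theta),
  continuous up to the boundary {s = 0}, C^2 and harmonic in the interior.\<close>
definition harmonic_on_end :: "(real \<Rightarrow> real) \<Rightarrow> (real \<Rightarrow> real) \<Rightarrow> (real \<times> real \<Rightarrow> real) \<Rightarrow> bool" where
  "harmonic_on_end g1 g2 u \<longleftrightarrow>
     (\<forall>s t. u (s, t + 2 * pi) = u (s, t)) \<and>
     continuous_on ({0..} \<times> UNIV) u \<and>
     C2_on ({0<..} \<times> UNIV) u \<and>
     (\<forall>s t. s > 0 \<longrightarrow> laplace_beltrami g1 g2 u (s,t) = 0)"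

definition parabolic_end :: "(real \<Rightarrow> real) \<Rightarrow> (real \<Rightarrow> real) \<Rightarrow> bool" where
  "parabolic_end g1 g2 \<longleftrightarrow>
     (\<forall>u v. harmonic_on_end g1 g2 u \<and> bounded (u ` ({0..} \<times> UNIV)) \<and>
            harmonic_on_end g1 g2 v \<and> bounded (v ` ({0..} \<times> UNIV)) \<and>
            (\<forall>t. u (0,t) = v (0,t)) \<longrightarrow>
            (\<forall>s t. s \<ge> 0 \<longrightarrow> u (s,t) = v (s,t)))"

end

theory Submission
  imports Defs
begin

text \<open>
  In the coordinates (s, \<theta>) the Laplace--Beltrami equation reads
  \<open>\<partial>\<^sub>s (A \<partial>\<^sub>s u) + B \<partial>\<^sub>\<theta>\<^sup>2 u = 0\<close> with \<open>A = \<gamma>\<^sub>1 / |\<gamma>'|\<close> and \<open>B = |\<gamma>'| / \<gamma>\<^sub>1 = 1 / A\<close>.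
  Hence \<open>H(s) = \<integral>\<^sub>0\<^sup>s B\<close> is a harmonic function of s alone, and the lower bound
  \<open>\<gamma>\<^sub>2 \<ge> z\<close> makes it unbounded: if \<open>\<gamma>\<^sub>1 \<le> K\<close> then \<open>B \<ge> (z/K) |\<gamma>'|/\<gamma>\<^sub>2\<close>, so H dominates a
  multiple of the (infinite) hyperbolic length, and otherwise \<open>B \<ge> (ln \<gamma>\<^sub>1)'\<close>.
  For bounded harmonic u, v with \<open>u \<le> v\<close> on the boundary, the maximum principle on
  \<open>[0, S] \<times> S\<^sup>1\<close>, with S so large that \<open>\<epsilon> H(S)\<close> exceeds \<open>sup (u - v)\<close>, gives
  \<open>u - v \<le> \<epsilon> H\<close>; letting \<open>\<epsilon> \<rightarrow> 0\<close> yields \<open>u \<le> v\<close>.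
\<close>

lemma interior_max_deriv:
  fixes \<phi> \<phi>' :: "real \<Rightarrow> real"
  assumes "a < x" "x < b"
    and max: "\<And>y. a < y \<Longrightarrow> y < b \<Longrightarrow> \<phi> y \<le> \<phi> x"
    and deriv: "\<And>y. a < y \<Longrightarrow> y < b \<Longrightarrow> (\<phi> has_real_derivative \<phi>' y) (at y)"
    and deriv2: "(\<phi>' has_real_derivative D) (at x)"
  shows "\<phi>' x = 0" and "D \<le> 0"
proof -
  show crit: "\<phi>' x = 0"
  proof (rule DERIV_local_max)
    show "(\<phi> has_real_derivative \<phi>' x) (at x)" using assms by auto
    show "0 < min (x - a) (b - x)" using assms by auto
    show "\<forall>y. \<bar>x - y\<bar> < min (x - a) (b - x) \<longrightarrow> \<phi> y \<le> \<phi> x"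
      using max by (auto simp: abs_if split: if_splits)
  qed
  show "D \<le> 0"
  proof (rule ccontr)
    assume "\<not> D \<le> 0"
    then obtain d where "d > 0" and incr: "\<And>h. 0 < h \<Longrightarrow> h < d \<Longrightarrow> \<phi>' x < \<phi>' (x + h)"
      using DERIV_pos_inc_right[OF deriv2] by auto
    define y where "y = x + min d (b - x) / 2"
    have y: "x < y" "y < b" "y - x < d"
      using \<open>d > 0\<close> \<open>x < b\<close> unfolding y_def by (auto simp: min_def field_simps)
    obtain \<xi> where \<xi>: "x < \<xi>" "\<xi> < y" "\<phi> y - \<phi> x = (y - x) * \<phi>' \<xi>"
      using MVT2[of x y \<phi> \<phi>'] y deriv \<open>a < x\<close> by force
    have "\<phi>' \<xi> > 0" using incr[of "\<xi> - x"] crit \<xi> y by auto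
    hence "(y - x) * \<phi>' \<xi> > 0" using \<xi> by simp
    hence "\<phi> y > \<phi> x" using \<xi>(3) by linarith
    moreover have "\<phi> y \<le> \<phi> x" using max y \<open>a < x\<close> by auto
    ultimately show False by simp
  qed
qed

lemma pd1_has_real_derivative:
  assumes "F differentiable (at (s, t))"
  shows "((\<lambda>r. F (r, t)) has_real_derivative pd1 F (s, t)) (at s)"
proof -
  have "(F \<circ> (\<lambda>r. (r, t))) differentiable (at s)"
    using assms by (intro differentiable_chain_at) (auto intro!: derivative_intros simp: differentiable_def)
  thus ?thesis unfolding pd1_def by (simp add: o_def DERIV_deriv_iff_real_differentiable)
qed

lemma pd2_has_real_derivative:
  assumes "F differentiable (at (s, t))"
  shows "((\<lambda>q. F (s, q)) has_real_derivative pd2 F (s, t)) (at t)"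
proof -
  have "(F \<circ> (\<lambda>q. (s, q))) differentiable (at t)"
    using assms by (intro differentiable_chain_at) (auto intro!: derivative_intros simp: differentiable_def)
  thus ?thesis unfolding pd2_def by (simp add: o_def DERIV_deriv_iff_real_differentiable)
qed

lemma indefinite_integral_has_real_derivative:
  fixes f :: "real \<Rightarrow> real"
  assumes "continuous_on {0..} f" "x > 0"
  shows "((\<lambda>T. integral {0..T} f) has_real_derivative f x) (at x)"
proof -
  have "((\<lambda>T. integral {0..T} f) has_real_derivative f x) (at x within {0..x+1})"
    using assms by (intro integral_has_real_derivative continuous_on_subset[OF assms(1)]) auto
  moreover have "at x within {0..x+1} = at x"
    using assms by (intro at_within_interior) auto
  ultimately show ?thesis by simp
qed

lemma continuous_on_indefinite_integral:
  fixes f :: "real \<Rightarrow> real"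
  assumes "continuous_on {0..} f"
  shows "continuous_on {0..b} (\<lambda>T. integral {0..T} f)"
  by (intro indefinite_integral_continuous_1 integrable_continuous_real
      continuous_on_subset[OF assms]) auto

lemma periodic_shift_of_int:
  assumes "\<And>t. f (t + 2 * pi) = f t"
  shows "f (t + 2 * pi * of_int k) = f t"
proof (induction k rule: int_induct[where k = 0])
  case (step1 i)
  have "f (t + 2 * pi * of_int (i + 1)) = f ((t + 2 * pi * of_int i) + 2 * pi)"
    by (simp add: algebra_simps)
  with assms step1 show ?case by simp
next
  case (step2 i)
  have "f (t + 2 * pi * of_int i) = f ((t + 2 * pi * of_int (i - 1)) + 2 * pi)"
    by (simp add: algebra_simps)
  with assms step2 show ?case by simp
qed simp

lemma periodic_value_in_period:
  assumes "\<And>t. f (t + 2 * pi) = f t"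
  obtains t' where "t' \<in> {0..2 * pi}" "f t = f t'"
proof
  let ?t' = "2 * pi * frac (t / (2 * pi))"
  show "?t' \<in> {0..2 * pi}" using frac_lt_1[of "t / (2 * pi)"] by auto
  have "t = ?t' + 2 * pi * of_int \<lfloor>t / (2 * pi)\<rfloor>" by (simp add: frac_def algebra_simps)
  thus "f t = f ?t'" using periodic_shift_of_int[of f, OF assms] by metis
qed

definition speed_sq :: "(real \<Rightarrow> real) \<Rightarrow> (real \<Rightarrow> real) \<Rightarrow> real \<Rightarrow> real" where
  "speed_sq g1 g2 r = (deriv g1 r)\<^sup>2 + (deriv g2 r)\<^sup>2"

definition radial_coeff :: "(real \<Rightarrow> real) \<Rightarrow> (real \<Rightarrow> real) \<Rightarrow> real \<Rightarrow> real" where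
  "radial_coeff g1 g2 r = g1 r / sqrt (speed_sq g1 g2 r)"

definition angular_coeff :: "(real \<Rightarrow> real) \<Rightarrow> (real \<Rightarrow> real) \<Rightarrow> real \<Rightarrow> real" where
  "angular_coeff g1 g2 r = sqrt (speed_sq g1 g2 r) / g1 r"

definition radial_potential :: "(real \<Rightarrow> real) \<Rightarrow> (real \<Rightarrow> real) \<Rightarrow> real \<Rightarrow> real" where
  "radial_potential g1 g2 T = integral {0..T} (angular_coeff g1 g2)"

lemma complete_end_of_revolutionD:
  assumes "complete_end_of_revolution g1 g2" "x \<ge> 0"
  shows "(g1 has_real_derivative deriv g1 x) (at x)" "(g2 has_real_derivative deriv g2 x) (at x)"
    and "deriv g1 differentiable (at x)" "deriv g2 differentiable (at x)"
    and "speed_sq g1 g2 x > 0" "g1 x > 0" "g2 x > 0"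
proof -
  obtain U where "{0..} \<subseteq> U" "smooth_on U g1" "smooth_on U g2"
    using assms(1) unfolding complete_end_of_revolution_def by auto
  with assms(2) have "((deriv ^^ n) g1) differentiable (at x)" "((deriv ^^ n) g2) differentiable (at x)"
    for n unfolding smooth_on_def by auto
  from this[of 0] this[of 1]
  show "(g1 has_real_derivative deriv g1 x) (at x)" "(g2 has_real_derivative deriv g2 x) (at x)"
    and "deriv g1 differentiable (at x)" "deriv g2 differentiable (at x)"
    by (auto simp: DERIV_deriv_iff_real_differentiable)
  show "speed_sq g1 g2 x > 0" "g1 x > 0" "g2 x > 0"
    using assms unfolding complete_end_of_revolution_def speed_sq_def by auto
qed

lemma complete_end_of_revolution_isCont:
  assumes "complete_end_of_revolution g1 g2" "x \<ge> 0"
  shows "isCont g1 x" "isCont g2 x" "isCont (deriv g1) x" "isCont (deriv g2) x"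
  using complete_end_of_revolutionD[OF assms]
  by (auto intro: DERIV_isCont differentiable_imp_continuous_within)

lemma continuous_on_angular_coeff:
  assumes "complete_end_of_revolution g1 g2"
  shows "continuous_on {0..} (angular_coeff g1 g2)"
proof (intro continuous_at_imp_continuous_on ballI)
  fix x :: real assume "x \<in> {0..}"
  hence "x \<ge> 0" by simp
  from complete_end_of_revolution_isCont[OF assms this] complete_end_of_revolutionD[OF assms this]
  show "isCont (angular_coeff g1 g2) x"
    unfolding angular_coeff_def speed_sq_def by (auto intro!: continuous_intros)
qed

lemma continuous_on_hyp_length_integrand:
  assumes "complete_end_of_revolution g1 g2"
  shows "continuous_on {0..} (\<lambda>s. sqrt ((deriv g1 s)\<^sup>2 + (deriv g2 s)\<^sup>2) / g2 s)"
proof (intro continuous_at_imp_continuous_on ballI)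
  fix x :: real assume "x \<in> {0..}"
  hence "x \<ge> 0" by simp
  from complete_end_of_revolution_isCont[OF assms this] complete_end_of_revolutionD[OF assms this]
  show "isCont (\<lambda>s. sqrt ((deriv g1 s)\<^sup>2 + (deriv g2 s)\<^sup>2) / g2 s) x"
    by (auto intro!: continuous_intros)
qed

lemma angular_coeff_pos:
  assumes "complete_end_of_revolution g1 g2" "x \<ge> 0"
  shows "angular_coeff g1 g2 x > 0"
  using complete_end_of_revolutionD[OF assms] unfolding angular_coeff_def by auto

lemma radial_coeff_mult_angular_coeff:
  assumes "complete_end_of_revolution g1 g2" "x \<ge> 0"
  shows "radial_coeff g1 g2 x * angular_coeff g1 g2 x = 1"
  using complete_end_of_revolutionD[OF assms] unfolding radial_coeff_def angular_coeff_def by simp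

lemma differentiable_coeffs:
  assumes "complete_end_of_revolution g1 g2" "x \<ge> 0"
  shows "\<exists>D. (angular_coeff g1 g2 has_real_derivative D) (at x)"
    and "\<exists>D. (radial_coeff g1 g2 has_real_derivative D) (at x)"
proof -
  note basic = complete_end_of_revolutionD[OF assms]
  obtain D1 D2 where "(deriv g1 has_real_derivative D1) (at x)" "(deriv g2 has_real_derivative D2) (at x)"
    using basic(3,4) by (auto simp: real_differentiable_def)
  hence "(speed_sq g1 g2 has_real_derivative 2 * deriv g1 x * D1 + 2 * deriv g2 x * D2) (at x)"
    unfolding speed_sq_def by (auto intro!: derivative_eq_intros)
  from DERIV_chain2[OF DERIV_real_sqrt[OF basic(5)] this]
  obtain S where S: "((\<lambda>r. sqrt (speed_sq g1 g2 r)) has_real_derivative S) (at x)" by blast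
  show "\<exists>D. (angular_coeff g1 g2 has_real_derivative D) (at x)"
    unfolding angular_coeff_def using DERIV_divide[OF S basic(1)] basic(6) by auto
  show "\<exists>D. (radial_coeff g1 g2 has_real_derivative D) (at x)"
    unfolding radial_coeff_def using DERIV_divide[OF basic(1) S] basic(5) by auto
qed

lemma radial_potential_0 [simp]: "radial_potential g1 g2 0 = 0"
  unfolding radial_potential_def by simp

lemma radial_potential_has_derivative:
  assumes "complete_end_of_revolution g1 g2" "s > 0"
  shows "(radial_potential g1 g2 has_real_derivative angular_coeff g1 g2 s) (at s)"
  unfolding radial_potential_def
  by (rule indefinite_integral_has_real_derivative[OF continuous_on_angular_coeff[OF assms(1)] assms(2)])

lemma continuous_on_radial_potential:
  assumes "complete_end_of_revolution g1 g2"
  shows "continuous_on {0..b} (radial_potential g1 g2)"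
  unfolding radial_potential_def
  by (rule continuous_on_indefinite_integral[OF continuous_on_angular_coeff[OF assms]])

lemma radial_potential_mono:
  assumes "complete_end_of_revolution g1 g2" "0 \<le> a" "a \<le> b"
  shows "radial_potential g1 g2 a \<le> radial_potential g1 g2 b"
proof (rule DERIV_nonneg_imp_increasing_open[OF assms(3)])
  show "\<exists>y. (radial_potential g1 g2 has_real_derivative y) (at x) \<and> 0 \<le> y" if "a < x" for x
    using radial_potential_has_derivative angular_coeff_pos assms that
    by (metis less_eq_real_def order_le_less_trans)
  show "continuous_on {a..b} (radial_potential g1 g2)"
    using continuous_on_radial_potential[OF assms(1), of b] by (rule continuous_on_subset) (use assms in auto)
qed

lemma radial_potential_has_integral:
  assumes "complete_end_of_revolution g1 g2" "T \<ge> 0"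
  shows "(angular_coeff g1 g2 has_integral radial_potential g1 g2 T) {0..T}"
  unfolding radial_potential_def
  by (intro integrable_integral integrable_continuous_real
      continuous_on_subset[OF continuous_on_angular_coeff[OF assms(1)]]) auto

lemma radial_potential_ge_hyp_length:
  assumes cer: "complete_end_of_revolution g1 g2" and "z > 0" and height: "\<forall>s\<ge>0. g2 s \<ge> z"
    and "K > 0" and width: "\<forall>s\<ge>0. g1 s \<le> K" and "T \<ge> 0"
  shows "z / K * hyp_length g1 g2 T \<le> radial_potential g1 g2 T"
proof (rule has_integral_le)
  show "((\<lambda>s. z / K * (sqrt ((deriv g1 s)\<^sup>2 + (deriv g2 s)\<^sup>2) / g2 s))
      has_integral z / K * hyp_length g1 g2 T) {0..T}"
    unfolding hyp_length_def
    by (intro has_integral_mult_right integrable_integral integrable_continuous_real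
        continuous_on_subset[OF continuous_on_hyp_length_integrand[OF cer]]) auto
  show "(angular_coeff g1 g2 has_integral radial_potential g1 g2 T) {0..T}"
    by (rule radial_potential_has_integral[OF cer \<open>T \<ge> 0\<close>])
next
  fix s assume "s \<in> {0..T}"
  hence "s \<ge> 0" by simp
  note basic = complete_end_of_revolutionD[OF cer this]
  define q where "q = sqrt ((deriv g1 s)\<^sup>2 + (deriv g2 s)\<^sup>2)"
  have "q \<ge> 0" by (simp add: q_def)
  have "z / K * (q / g2 s) \<le> z / K * (q / z)"
    using height \<open>s \<ge> 0\<close> \<open>z > 0\<close> \<open>K > 0\<close> \<open>q \<ge> 0\<close> by (intro mult_left_mono divide_left_mono) auto
  also have "\<dots> = q / K" using \<open>z > 0\<close> by simp
  also have "\<dots> \<le> q / g1 s" using width \<open>s \<ge> 0\<close> basic(6) \<open>q \<ge> 0\<close> by (intro divide_left_mono) auto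
  finally show "z / K * (q / g2 s) \<le> angular_coeff g1 g2 s"
    unfolding angular_coeff_def speed_sq_def q_def .
qed

lemma radial_potential_ge_ln:
  assumes cer: "complete_end_of_revolution g1 g2" and "T \<ge> 0"
  shows "ln (g1 T) - ln (g1 0) \<le> radial_potential g1 g2 T"
proof (rule has_integral_le)
  show "((\<lambda>s. deriv g1 s / g1 s) has_integral ln (g1 T) - ln (g1 0)) {0..T}"
  proof (rule fundamental_theorem_of_calculus[OF \<open>T \<ge> 0\<close>])
    fix s assume "s \<in> {0..T}"
    hence basic: "(g1 has_real_derivative deriv g1 s) (at s)" "g1 s > 0"
      using complete_end_of_revolutionD[OF cer] by auto
    have "((\<lambda>r. ln (g1 r)) has_real_derivative deriv g1 s / g1 s) (at s)"
      using DERIV_chain2[OF DERIV_ln_divide[OF basic(2)] basic(1)] by simp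
    thus "((\<lambda>r. ln (g1 r)) has_vector_derivative deriv g1 s / g1 s) (at s within {0..T})"
      by (simp add: has_real_derivative_iff_has_vector_derivative[symmetric] has_field_derivative_at_within)
  qed
  show "(angular_coeff g1 g2 has_integral radial_potential g1 g2 T) {0..T}"
    by (rule radial_potential_has_integral[OF cer \<open>T \<ge> 0\<close>])
next
  fix s assume "s \<in> {0..T}"
  hence "g1 s > 0" using complete_end_of_revolutionD(6)[OF cer] by auto
  thus "deriv g1 s / g1 s \<le> angular_coeff g1 g2 s"
    unfolding angular_coeff_def speed_sq_def by (intro divide_right_mono) auto
qed

lemma radial_potential_unbounded:
  assumes cer: "complete_end_of_revolution g1 g2" and "z > 0" and height: "\<forall>s\<ge>0. g2 s \<ge> z"
  shows "\<exists>S\<ge>0. M < radial_potential g1 g2 S"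
proof (cases "\<exists>K. \<forall>s\<ge>0. g1 s \<le> K")
  case True
  then obtain K where K: "\<forall>s\<ge>0. g1 s \<le> K" by auto
  have "K > 0" using K complete_end_of_revolutionD(6)[OF cer, of 0] by force
  have "filterlim (hyp_length g1 g2) at_top at_top"
    using cer unfolding complete_end_of_revolution_def by simp
  hence "filterlim (\<lambda>T. z / K * hyp_length g1 g2 T) at_top at_top"
    using \<open>z > 0\<close> \<open>K > 0\<close> by (intro filterlim_tendsto_pos_mult_at_top[OF tendsto_const]) auto
  then obtain S where "S \<ge> 0" "M < z / K * hyp_length g1 g2 S"
    by (auto simp: filterlim_at_top_dense eventually_at_top_linorder) (metis max.cobounded1 max.cobounded2)
  thus ?thesis
    using radial_potential_ge_hyp_length[OF cer \<open>z > 0\<close> height \<open>K > 0\<close> K] by force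
next
  case False
  then obtain S where "S \<ge> 0" "g1 S > exp (M + ln (g1 0))" by (auto simp: not_le)
  hence "exp (M + ln (g1 0)) < exp (ln (g1 S))"
    using complete_end_of_revolutionD(6)[OF cer] by simp
  hence "M < ln (g1 S) - ln (g1 0)" by simp
  thus ?thesis using radial_potential_ge_ln[OF cer \<open>S \<ge> 0\<close>] \<open>S \<ge> 0\<close> by force
qed

lemma sqrt_det_induced_metric:
  assumes "complete_end_of_revolution g1 g2" "r \<ge> 0"
  shows "sqrt (g_ss g1 g2 r * g_tt g1 g2 r) = sqrt (speed_sq g1 g2 r) * g1 r / (g2 r)\<^sup>2"
proof -
  note basic = complete_end_of_revolutionD[OF assms]
  have "g_ss g1 g2 r * g_tt g1 g2 r = (sqrt (speed_sq g1 g2 r) * g1 r / (g2 r)\<^sup>2)\<^sup>2"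
    using basic(5) by (simp add: g_ss_def g_tt_def speed_sq_def power_divide power_mult_distrib)
  thus ?thesis using basic(5-7) by simp
qed

lemma induced_metric_coeffs:
  assumes "complete_end_of_revolution g1 g2" "r \<ge> 0"
  shows "sqrt (g_ss g1 g2 r * g_tt g1 g2 r) / g_ss g1 g2 r = radial_coeff g1 g2 r"
    and "sqrt (g_ss g1 g2 r * g_tt g1 g2 r) / g_tt g1 g2 r = angular_coeff g1 g2 r"
proof -
  note basic = complete_end_of_revolutionD[OF assms]
  let ?v = "sqrt (speed_sq g1 g2 r)"
  have "?v > 0" using basic(5) by simp
  have "g_ss g1 g2 r = ?v * ?v / (g2 r)\<^sup>2"
    using basic(5) by (simp add: g_ss_def speed_sq_def)
  thus "sqrt (g_ss g1 g2 r * g_tt g1 g2 r) / g_ss g1 g2 r = radial_coeff g1 g2 r"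
    using \<open>?v > 0\<close> basic(7) unfolding sqrt_det_induced_metric[OF assms] radial_coeff_def
    by (simp add: field_simps)
  show "sqrt (g_ss g1 g2 r * g_tt g1 g2 r) / g_tt g1 g2 r = angular_coeff g1 g2 r"
    using basic(6,7) unfolding sqrt_det_induced_metric[OF assms] angular_coeff_def
    by (simp add: g_tt_def field_simps power2_eq_square)
qed

lemma harmonic_on_end_differentiable:
  assumes "harmonic_on_end g1 g2 u" "s > 0"
  shows "u differentiable (at (s, t))" "pd1 u differentiable (at (s, t))"
    and "pd2 u differentiable (at (s, t))"
  using assms unfolding harmonic_on_end_def C2_on_def by auto

lemma laplace_beltrami_radial_form:
  assumes cer: "complete_end_of_revolution g1 g2" and harm: "harmonic_on_end g1 g2 u"
    and "s > 0" and A': "(radial_coeff g1 g2 has_real_derivative A') (at s)"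
  shows "A' * pd1 u (s, t) + radial_coeff g1 g2 s * pd1 (pd1 u) (s, t)
           + angular_coeff g1 g2 s * pd2 (pd2 u) (s, t) = 0"
proof -
  let ?A = "radial_coeff g1 g2" and ?B = "angular_coeff g1 g2"
  let ?w = "\<lambda>r. sqrt (g_ss g1 g2 r * g_tt g1 g2 r)"
  note diff = harmonic_on_end_differentiable[OF harm \<open>s > 0\<close>]
  have "((\<lambda>r. ?A r * pd1 u (r, t)) has_real_derivative
      A' * pd1 u (s, t) + ?A s * pd1 (pd1 u) (s, t)) (at s)"
    using DERIV_mult[OF A' pd1_has_real_derivative[OF diff(2)]] by (simp add: ac_simps)
  hence "((\<lambda>r. ?w r / g_ss g1 g2 r * pd1 u (r, t)) has_real_derivative
      A' * pd1 u (s, t) + ?A s * pd1 (pd1 u) (s, t)) (at s)"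
    by (rule has_field_derivative_transform_within_open[where S = "{0<..}"])
       (use \<open>s > 0\<close> induced_metric_coeffs(1)[OF cer] in auto)
  hence radial: "pd1 (\<lambda>(r, q). ?w r / g_ss g1 g2 r * pd1 u (r, q)) (s, t)
      = A' * pd1 u (s, t) + ?A s * pd1 (pd1 u) (s, t)"
    unfolding pd1_def by (simp add: DERIV_imp_deriv)
  have angular: "pd2 (\<lambda>(r, q). ?w r / g_tt g1 g2 r * pd2 u (r, q)) (s, t)
      = ?B s * pd2 (pd2 u) (s, t)"
    unfolding pd2_def case_prod_conv induced_metric_coeffs(2)[OF cer less_imp_le[OF \<open>s > 0\<close>]]
    by (rule DERIV_imp_deriv, rule DERIV_cmult)
       (rule pd2_has_real_derivative[OF diff(3), unfolded pd2_def case_prod_conv])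
  have "?w s > 0"
    using complete_end_of_revolutionD(5-7)[OF cer less_imp_le[OF \<open>s > 0\<close>]]
    by (simp add: sqrt_det_induced_metric[OF cer less_imp_le[OF \<open>s > 0\<close>]])
  moreover have "laplace_beltrami g1 g2 u (s, t) = 0"
    using harm \<open>s > 0\<close> unfolding harmonic_on_end_def by auto
  hence "1 / ?w s * (A' * pd1 u (s, t) + ?A s * pd1 (pd1 u) (s, t) + ?B s * pd2 (pd2 u) (s, t)) = 0"
    unfolding laplace_beltrami_def case_prod_conv radial angular .
  ultimately show ?thesis by (metis divide_eq_0_iff less_irrefl mult_eq_0_iff zero_neq_one)
qed

lemma radial_coeff_angular_coeff_deriv:
  assumes cer: "complete_end_of_revolution g1 g2" and "s > 0"
    and A': "(radial_coeff g1 g2 has_real_derivative A') (at s)"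
    and B': "(angular_coeff g1 g2 has_real_derivative B') (at s)"
  shows "A' * angular_coeff g1 g2 s + radial_coeff g1 g2 s * B' = 0"
proof (rule DERIV_unique)
  show "((\<lambda>r. radial_coeff g1 g2 r * angular_coeff g1 g2 r) has_real_derivative
      A' * angular_coeff g1 g2 s + radial_coeff g1 g2 s * B') (at s)"
    using DERIV_mult[OF A' B'] by (simp add: ac_simps)
  show "((\<lambda>r. radial_coeff g1 g2 r * angular_coeff g1 g2 r) has_real_derivative 0) (at s)"
    by (rule has_field_derivative_transform_within_open[OF DERIV_const[of 1], where S = "{0<..}"])
       (use \<open>s > 0\<close> radial_coeff_mult_angular_coeff[OF cer] in auto)
qed

text \<open>Subtracting \<open>\<delta> H\<^sup>2\<close>, for which \<open>\<partial>\<^sub>s (A \<partial>\<^sub>s H\<^sup>2) = 2B > 0\<close>, makes the barrier strictly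
  superharmonic, so that \<open>u - v - barrier\<close> cannot attain an interior maximum.\<close>

definition barrier :: "(real \<Rightarrow> real) \<Rightarrow> (real \<Rightarrow> real) \<Rightarrow> real \<Rightarrow> real \<Rightarrow> real \<Rightarrow> real" where
  "barrier g1 g2 \<epsilon> \<delta> s = \<epsilon> * radial_potential g1 g2 s - \<delta> * (radial_potential g1 g2 s)\<^sup>2"

lemma barrier_0 [simp]: "barrier g1 g2 \<epsilon> \<delta> 0 = 0"
  by (simp add: barrier_def)

lemma barrier_has_derivative:
  assumes "complete_end_of_revolution g1 g2" "s > 0"
  shows "(barrier g1 g2 \<epsilon> \<delta> has_real_derivative
           (\<epsilon> - 2 * \<delta> * radial_potential g1 g2 s) * angular_coeff g1 g2 s) (at s)"
  unfolding barrier_def using radial_potential_has_derivative[OF assms]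
  by (auto intro!: derivative_eq_intros simp: algebra_simps)

lemma continuous_on_barrier:
  assumes "complete_end_of_revolution g1 g2"
  shows "continuous_on {0..S} (barrier g1 g2 \<epsilon> \<delta>)"
  unfolding barrier_def using continuous_on_radial_potential[OF assms]
  by (intro continuous_intros)

lemma radial_form_neg_at_max:
  fixes A B A' B' c \<delta> D1 D11 D22 :: real
  assumes "B > 0" "A * B = 1" "A' * B + A * B' = 0" "\<delta> > 0"
    and "D1 = c * B" "D11 \<le> c * B' - 2 * \<delta> * B * B" "D22 \<le> 0"
  shows "A' * D1 + A * D11 + B * D22 < 0"
proof -
  have "A > 0" using assms(1,2) by (metis zero_less_mult_pos2 zero_less_one)
  hence "A * D11 \<le> A * (c * B' - 2 * \<delta> * B * B)" using assms(6) by (simp add: mult_left_mono)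
  also have "\<dots> = c * (A * B') - 2 * \<delta> * B * (A * B)" by (simp add: algebra_simps)
  finally have "A' * D1 + A * D11 \<le> c * (A' * B + A * B') - 2 * \<delta> * B * (A * B)"
    using assms(5) by (simp add: algebra_simps)
  moreover have "B * D22 \<le> 0" using assms(1,7) by (simp add: mult_nonneg_nonpos)
  ultimately show ?thesis using assms(2,3) mult_pos_pos[OF assms(4,1)] by simp
qed

lemma comparison_no_interior_max:
  fixes u v w :: "real \<times> real \<Rightarrow> real"
  assumes cer: "complete_end_of_revolution g1 g2"
    and hu: "harmonic_on_end g1 g2 u" and hv: "harmonic_on_end g1 g2 v"
    and w: "\<And>r q. w (r, q) = u (r, q) - v (r, q) - barrier g1 g2 \<epsilon> \<delta> r"
    and "\<delta> > 0" "0 < s" "s < b"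
    and radial_max: "\<And>r. 0 < r \<Longrightarrow> r < b \<Longrightarrow> w (r, t) \<le> w (s, t)"
    and angular_max: "\<And>q. w (s, q) \<le> w (s, t)"
  shows False
proof -
  let ?A = "radial_coeff g1 g2" and ?B = "angular_coeff g1 g2" and ?H = "radial_potential g1 g2"
  define c where "c r = \<epsilon> - 2 * \<delta> * ?H r" for r
  obtain A' B' where A': "(?A has_real_derivative A') (at s)" and B': "(?B has_real_derivative B') (at s)"
    using differentiable_coeffs[OF cer less_imp_le[OF \<open>s > 0\<close>]] by blast
  note du = harmonic_on_end_differentiable[OF hu] and dv = harmonic_on_end_differentiable[OF hv]
  define \<phi>' where "\<phi>' r = pd1 u (r, t) - pd1 v (r, t) - c r * ?B r" for r
  have d\<phi>: "((\<lambda>r. w (r, t)) has_real_derivative \<phi>' r) (at r)" if "0 < r" "r < b" for r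
    unfolding w \<phi>'_def c_def
    by (intro DERIV_diff pd1_has_real_derivative du dv barrier_has_derivative[OF cer] that)
  have d\<phi>': "(\<phi>' has_real_derivative
      pd1 (pd1 u) (s, t) - pd1 (pd1 v) (s, t) - (c s * B' - 2 * \<delta> * ?B s * ?B s)) (at s)"
    unfolding \<phi>'_def c_def
    using pd1_has_real_derivative[OF du(2)[OF \<open>s > 0\<close>]] pd1_has_real_derivative[OF dv(2)[OF \<open>s > 0\<close>]]
      radial_potential_has_derivative[OF cer \<open>s > 0\<close>] B'
    by (auto intro!: derivative_eq_intros simp: algebra_simps)
  note radial_crit =
    interior_max_deriv[where \<phi> = "\<lambda>r. w (r, t)", OF \<open>0 < s\<close> \<open>s < b\<close> radial_max d\<phi> d\<phi>']
  define \<psi>' where "\<psi>' q = pd2 u (s, q) - pd2 v (s, q)" for q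
  have d\<psi>: "((\<lambda>q. w (s, q)) has_real_derivative \<psi>' q) (at q)" for q
  proof -
    have "((\<lambda>q. u (s, q) - v (s, q) - barrier g1 g2 \<epsilon> \<delta> s) has_real_derivative \<psi>' q - 0) (at q)"
      unfolding \<psi>'_def by (intro DERIV_diff DERIV_const pd2_has_real_derivative du dv \<open>s > 0\<close>)
    thus ?thesis by (simp add: w)
  qed
  have d\<psi>': "(\<psi>' has_real_derivative pd2 (pd2 u) (s, t) - pd2 (pd2 v) (s, t)) (at t)"
    unfolding \<psi>'_def by (intro DERIV_diff pd2_has_real_derivative du dv \<open>s > 0\<close>)
  have "t - 1 < t" "t < t + 1" by simp_all
  note angular_crit = interior_max_deriv[where \<phi> = "\<lambda>q. w (s, q)", OF this angular_max d\<psi> d\<psi>']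
  have "A' * (pd1 u (s, t) - pd1 v (s, t)) + ?A s * (pd1 (pd1 u) (s, t) - pd1 (pd1 v) (s, t))
      + ?B s * (pd2 (pd2 u) (s, t) - pd2 (pd2 v) (s, t)) = 0"
    using laplace_beltrami_radial_form[OF cer hu \<open>s > 0\<close> A', of t]
      laplace_beltrami_radial_form[OF cer hv \<open>s > 0\<close> A', of t]
    by (simp add: algebra_simps)
  moreover have "A' * (pd1 u (s, t) - pd1 v (s, t)) + ?A s * (pd1 (pd1 u) (s, t) - pd1 (pd1 v) (s, t))
      + ?B s * (pd2 (pd2 u) (s, t) - pd2 (pd2 v) (s, t)) < 0"
  proof (rule radial_form_neg_at_max)
    show "?B s > 0" "?A s * ?B s = 1"
      using angular_coeff_pos radial_coeff_mult_angular_coeff cer \<open>s > 0\<close> by auto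
    show "A' * ?B s + ?A s * B' = 0"
      by (rule radial_coeff_angular_coeff_deriv[OF cer \<open>s > 0\<close> A' B'])
    show "pd1 u (s, t) - pd1 v (s, t) = c s * ?B s" using radial_crit(1) by (simp add: \<phi>'_def)
  qed (use \<open>\<delta> > 0\<close> radial_crit(2) angular_crit(2) in simp_all)
  ultimately show False by simp
qed

lemma harmonic_diff_le_barrier:
  fixes u v :: "real \<times> real \<Rightarrow> real"
  assumes cer: "complete_end_of_revolution g1 g2"
    and hu: "harmonic_on_end g1 g2 u" and hv: "harmonic_on_end g1 g2 v"
    and "\<delta> > 0" and boundary: "\<And>q. u (0, q) \<le> v (0, q)"
    and upper: "\<And>p. p \<in> {0..} \<times> UNIV \<Longrightarrow> u p - v p \<le> M"
    and far: "M < barrier g1 g2 \<epsilon> \<delta> S" and "0 \<le> s" "s \<le> S"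
  shows "u (s, t) - v (s, t) \<le> barrier g1 g2 \<epsilon> \<delta> s"
proof -
  define w where "w p = u p - v p - barrier g1 g2 \<epsilon> \<delta> (fst p)" for p
  define K where "K = {0..S} \<times> {0..2 * pi}"
  have "continuous_on K w"
  proof -
    have "K \<subseteq> {0..} \<times> UNIV" by (auto simp: K_def)
    moreover have "continuous_on ({0..} \<times> UNIV) u" "continuous_on ({0..} \<times> UNIV) v"
      using hu hv by (auto simp: harmonic_on_end_def)
    ultimately have "continuous_on K u" "continuous_on K v" by (auto intro: continuous_on_subset)
    moreover have "continuous_on K (\<lambda>p. barrier g1 g2 \<epsilon> \<delta> (fst p))"
      by (rule continuous_on_compose2[OF continuous_on_barrier[OF cer] continuous_on_fst]) (auto simp: K_def)
    ultimately show ?thesis unfolding w_def by (intro continuous_on_diff)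
  qed
  moreover have "compact K" unfolding K_def by (intro compact_Times compact_Icc)
  moreover have "K \<noteq> {}" using \<open>0 \<le> s\<close> \<open>s \<le> S\<close> by (auto simp: K_def)
  ultimately obtain p where "p \<in> K" and max_K: "\<And>p'. p' \<in> K \<Longrightarrow> w p' \<le> w p"
    using continuous_attains_sup[of K w] by blast
  obtain s0 t0 where p: "p = (s0, t0)" "0 \<le> s0" "s0 \<le> S"
    using \<open>p \<in> K\<close> by (auto simp: K_def)
  have max: "w (r, q) \<le> w p" if "0 \<le> r" "r \<le> S" for r q
  proof -
    have "w (r, q' + 2 * pi) = w (r, q')" for q'
      using hu hv unfolding w_def harmonic_on_end_def by simp
    then obtain q' where "q' \<in> {0..2 * pi}" "w (r, q) = w (r, q')"
      using periodic_value_in_period[where f = "\<lambda>q. w (r, q)"] by blast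
    thus ?thesis using max_K[of "(r, q')"] that by (simp add: K_def)
  qed
  have "w p \<le> 0"
  proof (rule ccontr)
    assume "\<not> w p \<le> 0"
    moreover have "w (0, t0) \<le> 0" using boundary by (simp add: w_def)
    moreover have "w (S, t0) < 0" using upper[of "(S, t0)"] far \<open>0 \<le> s\<close> \<open>s \<le> S\<close> by (simp add: w_def)
    ultimately have "s0 \<noteq> 0" "s0 \<noteq> S" using p(1) by auto
    hence "0 < s0" "s0 < S" using p(2,3) by linarith+
    show False
    proof (rule comparison_no_interior_max[where w = w and t = t0 and \<epsilon> = \<epsilon>,
          OF cer hu hv _ \<open>\<delta> > 0\<close> \<open>0 < s0\<close> \<open>s0 < S\<close>])
      show "w (r, q) = u (r, q) - v (r, q) - barrier g1 g2 \<epsilon> \<delta> r" for r q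
        by (simp add: w_def)
      show "w (r, t0) \<le> w (s0, t0)" if "0 < r" "r < S" for r
        using max[of r t0] that p(1) by simp
      show "w (s0, q) \<le> w (s0, t0)" for q
        using max[of s0 q] p by simp
    qed
  qed
  thus ?thesis using max[OF \<open>0 \<le> s\<close> \<open>s \<le> S\<close>, of t] by (simp add: w_def)
qed

lemma harmonic_diff_le_potential:
  fixes u v :: "real \<times> real \<Rightarrow> real"
  assumes cer: "complete_end_of_revolution g1 g2" and "z > 0" and height: "\<forall>s\<ge>0. g2 s \<ge> z"
    and hu: "harmonic_on_end g1 g2 u" and hv: "harmonic_on_end g1 g2 v"
    and boundary: "\<And>q. u (0, q) \<le> v (0, q)"
    and upper: "\<And>p. p \<in> {0..} \<times> UNIV \<Longrightarrow> u p - v p \<le> M"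
    and "\<epsilon> > 0" "s \<ge> 0"
  shows "u (s, t) - v (s, t) \<le> \<epsilon> * radial_potential g1 g2 s"
proof -
  let ?H = "radial_potential g1 g2"
  obtain S0 where "S0 \<ge> 0" "(\<bar>M\<bar> + 1) / \<epsilon> < ?H S0"
    using radial_potential_unbounded[OF cer \<open>z > 0\<close> height] by blast
  define S where "S = max S0 s"
  have "(\<bar>M\<bar> + 1) / \<epsilon> < ?H S"
    using radial_potential_mono[OF cer \<open>S0 \<ge> 0\<close>, of S] \<open>(\<bar>M\<bar> + 1) / \<epsilon> < ?H S0\<close> by (simp add: S_def)
  moreover have "0 < (\<bar>M\<bar> + 1) / \<epsilon>" using \<open>\<epsilon> > 0\<close> by simp
  ultimately have "?H S > 0" by linarith
  have "\<bar>M\<bar> + 1 < \<epsilon> * ?H S"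
    using \<open>(\<bar>M\<bar> + 1) / \<epsilon> < ?H S\<close> \<open>\<epsilon> > 0\<close> by (simp add: pos_divide_less_eq algebra_simps)
  define \<delta> where "\<delta> = 1 / (2 * (?H S)\<^sup>2)"
  have "\<delta> > 0" "\<delta> * (?H S)\<^sup>2 = 1 / 2" using \<open>?H S > 0\<close> by (simp_all add: \<delta>_def)
  hence "M < barrier g1 g2 \<epsilon> \<delta> S"
    using \<open>\<bar>M\<bar> + 1 < \<epsilon> * ?H S\<close> unfolding barrier_def by linarith
  hence "u (s, t) - v (s, t) \<le> barrier g1 g2 \<epsilon> \<delta> s"
    using harmonic_diff_le_barrier[OF cer hu hv \<open>\<delta> > 0\<close> boundary upper] \<open>s \<ge> 0\<close> by (simp add: S_def)
  moreover have "\<delta> * (?H s)\<^sup>2 \<ge> 0" using \<open>\<delta> > 0\<close> by simp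
  ultimately show ?thesis unfolding barrier_def by linarith
qed

lemma harmonic_le_of_boundary_le:
  fixes u v :: "real \<times> real \<Rightarrow> real"
  assumes cer: "complete_end_of_revolution g1 g2" and "z > 0" and height: "\<forall>s\<ge>0. g2 s \<ge> z"
    and hu: "harmonic_on_end g1 g2 u" and hv: "harmonic_on_end g1 g2 v"
    and bounded: "bounded (u ` ({0..} \<times> UNIV))" "bounded (v ` ({0..} \<times> UNIV))"
    and boundary: "\<And>q. u (0, q) \<le> v (0, q)" and "s \<ge> 0"
  shows "u (s, t) \<le> v (s, t)"
proof -
  obtain a where a: "\<forall>p \<in> {0..} \<times> UNIV. \<bar>u p\<bar> \<le> a" using bounded(1) by (auto simp: bounded_real)
  obtain b where b: "\<forall>p \<in> {0..} \<times> UNIV. \<bar>v p\<bar> \<le> b" using bounded(2) by (auto simp: bounded_real)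
  have upper: "u p - v p \<le> a + b" if "p \<in> {0..} \<times> UNIV" for p
  proof -
    have "\<bar>u p\<bar> \<le> a" "\<bar>v p\<bar> \<le> b" using a b that by blast+
    thus ?thesis by (simp add: abs_le_iff)
  qed
  have small: "u (s, t) - v (s, t) \<le> \<epsilon> * radial_potential g1 g2 s" if "\<epsilon> > 0" for \<epsilon>
    by (rule harmonic_diff_le_potential[OF cer \<open>z > 0\<close> height hu hv boundary upper that \<open>s \<ge> 0\<close>])
  have "u (s, t) - v (s, t) \<le> 0"
  proof (rule tendsto_lowerbound[where f = "\<lambda>\<epsilon>. \<epsilon> * radial_potential g1 g2 s" and F = "at_right 0"])
    show "((\<lambda>\<epsilon>. \<epsilon> * radial_potential g1 g2 s) \<longlongrightarrow> 0) (at_right 0)"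
      by (auto intro!: tendsto_eq_intros)
    show "\<forall>\<^sub>F \<epsilon> in at_right 0. u (s, t) - v (s, t) \<le> \<epsilon> * radial_potential g1 g2 s"
      using eventually_at_right_less by (rule eventually_mono) (rule small)
  qed simp
  thus ?thesis by simp
qed

theorem theoremC:
  fixes g1 g2 :: "real \<Rightarrow> real" and z :: real
  assumes "complete_end_of_revolution g1 g2"
    and "z > 0"
    and "\<forall>s\<ge>0. g2 s \<ge> z"
  shows "parabolic_end g1 g2"
  unfolding parabolic_end_def
proof (intro allI impI)
  fix u v :: "real \<times> real \<Rightarrow> real" and s t :: real
  assume "harmonic_on_end g1 g2 u \<and> bounded (u ` ({0..} \<times> UNIV)) \<and>
      harmonic_on_end g1 g2 v \<and> bounded (v ` ({0..} \<times> UNIV)) \<and> (\<forall>t. u (0, t) = v (0, t))"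
    and "0 \<le> s"
  hence "u (s, t) \<le> v (s, t)" and "v (s, t) \<le> u (s, t)"
    using harmonic_le_of_boundary_le[OF assms] by auto
  thus "u (s, t) = v (s, t)" by (rule order.antisym)
qed

end
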